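(* Let $\Lambda$ be a unital commutative ring, $q$ a non-negative integer, $\mathfrak g$ a Lie algebra over $\Lambda$ and $\mathfrak h$ an ideal of $\mathfrak g$. Then the canonical sequence of Lie algebras $\mathfrak h\wedge^q\mathfrak g\longrightarrow\mathfrak g\wedge^q\mathfrak g\longrightarrow(\mathfrak g/\mathfrak h)\wedge^q(\mathfrak g/\mathfrak h)\longrightarrow0$ is exact.
   Context: All Lie algebras are over $\Lambda$. For an ideal $\mathfrak h$ of $\mathfrak g$ and $q\ge1$, $\mathfrak h\otimes^q\mathfrak g$ is the Lie algebra generated by symbols $h\otimes g$, $\{h\}$ ($h\in\mathfrak h,g\in\mathfrak g$) subject to, for all $h,h'\in\mathfrak h$, $g,g'\in\mathfrak g$, $\lambda,\lambda'\in\Lambda$: (1) $\lambda(h\otimes g)=\lambda h\otimes g=h\otimes\lambda g$; (2) $(h+h')\otimes g=h\otimes g+h'\otimes g$; (3) $h\otimes(g+g')=h\otimes g+h\otimes g'$; (4) $[h,h']\otimes g=h\otimes[h',g]-h'\otimes[h,g]$; (5) $h\otimes[g,g']=[g',h]\otimes g-[g,h]\otimes g'$; (6) $[h\otimes g,h'\otimes g']=[h,g]\otimes[h',g']$; (7) $[\{h'\},h\otimes g]=[qh',h]\otimes g+h\otimes[qh',g]$; (8) $\{\lambda h+\lambda'h'\}=\lambda\{h\}+\lambda'\{h'\}$; (9) $[\{h\},\{h'\}]=qh\otimes qh'$; (10) $\{[h,g]\}=q(h\otimes g)$. For $q=0$, it is generated by the $h\otimes g$ subject to (1)–(6) only. The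 $q$-exterior product $\mathfrak h\wedge^q\mathfrak g$ is the quotient by the relations $h\otimes h=0$, $h\in\mathfrak h$, with images $h\wedge g,\{h\}$. The canonical maps are $h\wedge g\mapsto h\wedge g$, $\{h\}\mapsto\{h\}$ and $g\wedge g'\mapsto (g+\mathfrak h)\wedge(g'+\mathfrak h)$, $\{g\}\mapsto\{g+\mathfrak h\}$. *)

theory Defs
  imports Main
begin

record ('r, 'a) lie_alg =
  lcarrier :: "'a set"
  lzero :: 'a
  ladd :: "'a \<Rightarrow> 'a \<Rightarrow> 'a"
  lneg :: "'a \<Rightarrow> 'a"
  lsmul :: "'r \<Rightarrow> 'a \<Rightarrow> 'a"
  lbr :: "'a \<Rightarrow> 'a \<Rightarrow> 'a"

definition lie_algebra :: "('r::comm_ring_1, 'a) lie_alg \<Rightarrow> bool" where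
  "lie_algebra L \<longleftrightarrow>
    (let C = lcarrier L; add = ladd L; z = lzero L; ng = lneg L; sm = lsmul L; br = lbr L in
     z \<in> C \<and>
     (\<forall>x\<in>C. \<forall>y\<in>C. add x y \<in> C) \<and>
     (\<forall>x\<in>C. ng x \<in> C) \<and>
     (\<forall>r. \<forall>x\<in>C. sm r x \<in> C) \<and>
     (\<forall>x\<in>C. \<forall>y\<in>C. br x y \<in> C) \<and>
     (\<forall>x\<in>C. \<forall>y\<in>C. \<forall>w\<in>C. add (add x y) w = add x (add y w)) \<and>
     (\<forall>x\<in>C. \<forall>y\<in>C. add x y = add y x) \<and>
     (\<forall>x\<in>C. add x z = x) \<and>
     (\<forall>x\<in>C. add x (ng x) = z) \<and>
     (\<forall>x\<in>C. sm 1 x = x) \<and>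
     (\<forall>r s. \<forall>x\<in>C. sm (r * s) x = sm r (sm s x)) \<and>
     (\<forall>r s. \<forall>x\<in>C. sm (r + s) x = add (sm r x) (sm s x)) \<and>
     (\<forall>r. \<forall>x\<in>C. \<forall>y\<in>C. sm r (add x y) = add (sm r x) (sm r y)) \<and>
     (\<forall>x\<in>C. \<forall>y\<in>C. \<forall>w\<in>C. br (add x y) w = add (br x w) (br y w)) \<and>
     (\<forall>x\<in>C. \<forall>y\<in>C. \<forall>w\<in>C. br w (add x y) = add (br w x) (br w y)) \<and>
     (\<forall>r. \<forall>x\<in>C. \<forall>y\<in>C. br (sm r x) y = sm r (br x y)) \<and>
     (\<forall>r. \<forall>x\<in>C. \<forall>y\<in>C. br x (sm r y) = sm r (br x y)) \<and>
     (\<forall>x\<in>C. br x x = z) \<and>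
     (\<forall>x\<in>C. \<forall>y\<in>C. \<forall>w\<in>C.
        add (br x (br y w)) (add (br y (br w x)) (br w (br x y))) = z))"

definition lie_ideal :: "('r::comm_ring_1, 'a) lie_alg \<Rightarrow> 'a set \<Rightarrow> bool" where
  "lie_ideal L H \<longleftrightarrow>
     H \<subseteq> lcarrier L \<and> lzero L \<in> H \<and>
     (\<forall>x\<in>H. \<forall>y\<in>H. ladd L x y \<in> H) \<and>
     (\<forall>x\<in>H. lneg L x \<in> H) \<and>
     (\<forall>r. \<forall>x\<in>H. lsmul L r x \<in> H) \<and>
     (\<forall>x\<in>lcarrier L. \<forall>h\<in>H. lbr L x h \<in> H)"

definition lcoset :: "('r, 'a) lie_alg \<Rightarrow> 'a set \<Rightarrow> 'a \<Rightarrow> 'a set" where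
  "lcoset L H x = {ladd L x h | h. h \<in> H}"

definition crep :: "'a set \<Rightarrow> 'a" where
  "crep A = (SOME a. a \<in> A)"

definition quotient_lie :: "('r, 'a) lie_alg \<Rightarrow> 'a set \<Rightarrow> ('r, 'a set) lie_alg" where
  "quotient_lie L H =
    \<lparr> lcarrier = lcoset L H ` lcarrier L,
      lzero = lcoset L H (lzero L),
      ladd = (\<lambda>A B. lcoset L H (ladd L (crep A) (crep B))),
      lneg = (\<lambda>A. lcoset L H (lneg L (crep A))),
      lsmul = (\<lambda>r A. lcoset L H (lsmul L r (crep A))),
      lbr = (\<lambda>A B. lcoset L H (lbr L (crep A) (crep B))) \<rparr>"

datatype ('r, 'x) lterm =
  Gen 'x | LZero | LAdd "('r, 'x) lterm" "('r, 'x) lterm" | LNeg "('r, 'x) lterm"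
  | LSmul 'r "('r, 'x) lterm" | LBr "('r, 'x) lterm" "('r, 'x) lterm"

primrec lgens :: "('r, 'x) lterm \<Rightarrow> 'x set" where
  "lgens (Gen x) = {x}"
| "lgens LZero = {}"
| "lgens (LAdd a b) = lgens a \<union> lgens b"
| "lgens (LNeg a) = lgens a"
| "lgens (LSmul r a) = lgens a"
| "lgens (LBr a b) = lgens a \<union> lgens b"

inductive lcong :: "(('r::comm_ring_1, 'x) lterm \<times> ('r, 'x) lterm) set
    \<Rightarrow> ('r, 'x) lterm \<Rightarrow> ('r, 'x) lterm \<Rightarrow> bool" for R where
  rel: "(s, t) \<in> R \<Longrightarrow> lcong R s t"
| refl: "lcong R t t"
| sym: "lcong R s t \<Longrightarrow> lcong R t s"
| trans: "lcong R s t \<Longrightarrow> lcong R t u \<Longrightarrow> lcong R s u"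
| cAdd: "lcong R a a' \<Longrightarrow> lcong R b b' \<Longrightarrow> lcong R (LAdd a b) (LAdd a' b')"
| cNeg: "lcong R a a' \<Longrightarrow> lcong R (LNeg a) (LNeg a')"
| cSmul: "lcong R a a' \<Longrightarrow> lcong R (LSmul r a) (LSmul r a')"
| cBr: "lcong R a a' \<Longrightarrow> lcong R b b' \<Longrightarrow> lcong R (LBr a b) (LBr a' b')"
| add_assoc: "lcong R (LAdd (LAdd a b) c) (LAdd a (LAdd b c))"
| add_comm: "lcong R (LAdd a b) (LAdd b a)"
| add_zero: "lcong R (LAdd a LZero) a"
| add_neg: "lcong R (LAdd a (LNeg a)) LZero"
| smul_one: "lcong R (LSmul 1 a) a"
| smul_mult: "lcong R (LSmul (r * s) a) (LSmul r (LSmul s a))"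
| smul_add_s: "lcong R (LSmul (r + s) a) (LAdd (LSmul r a) (LSmul s a))"
| smul_add_v: "lcong R (LSmul r (LAdd a b)) (LAdd (LSmul r a) (LSmul r b))"
| br_add_l: "lcong R (LBr (LAdd a b) c) (LAdd (LBr a c) (LBr b c))"
| br_add_r: "lcong R (LBr c (LAdd a b)) (LAdd (LBr c a) (LBr c b))"
| br_smul_l: "lcong R (LBr (LSmul r a) b) (LSmul r (LBr a b))"
| br_smul_r: "lcong R (LBr a (LSmul r b)) (LSmul r (LBr a b))"
| br_alt: "lcong R (LBr a a) LZero"
| jacobi: "lcong R (LAdd (LBr a (LBr b c)) (LAdd (LBr b (LBr c a)) (LBr c (LBr a b)))) LZero"

definition pclass :: "(('r::comm_ring_1, 'x) lterm \<times> ('r, 'x) lterm) set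
    \<Rightarrow> ('r, 'x) lterm \<Rightarrow> ('r, 'x) lterm set" where
  "pclass R t = {s. lcong R t s}"

definition presented :: "('x \<Rightarrow> bool) \<Rightarrow> (('r::comm_ring_1, 'x) lterm \<times> ('r, 'x) lterm) set
    \<Rightarrow> ('r, ('r, 'x) lterm set) lie_alg" where
  "presented P R =
    \<lparr> lcarrier = {pclass R t | t. \<forall>x\<in>lgens t. P x},
      lzero = pclass R LZero,
      ladd = (\<lambda>A B. pclass R (LAdd (crep A) (crep B))),
      lneg = (\<lambda>A. pclass R (LNeg (crep A))),
      lsmul = (\<lambda>r A. pclass R (LSmul r (crep A))),
      lbr = (\<lambda>A B. pclass R (LBr (crep A) (crep B))) \<rparr>"

primrec lterm_map :: "('x \<Rightarrow> ('r, 'y) lterm) \<Rightarrow> ('r, 'x) lterm \<Rightarrow> ('r, 'y) lterm" where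
  "lterm_map f (Gen x) = f x"
| "lterm_map f LZero = LZero"
| "lterm_map f (LAdd a b) = LAdd (lterm_map f a) (lterm_map f b)"
| "lterm_map f (LNeg a) = LNeg (lterm_map f a)"
| "lterm_map f (LSmul r a) = LSmul r (lterm_map f a)"
| "lterm_map f (LBr a b) = LBr (lterm_map f a) (lterm_map f b)"

definition induced_map :: "(('r::comm_ring_1, 'y) lterm \<times> ('r, 'y) lterm) set
    \<Rightarrow> ('x \<Rightarrow> ('r, 'y) lterm) \<Rightarrow> ('r, 'x) lterm set \<Rightarrow> ('r, 'y) lterm set" where
  "induced_map R' f A = pclass R' (lterm_map f (crep A))"

text \<open>Tns h g stands for h \<otimes> g, Brc h for {h}.\<close>
datatype 'a tgen = Tns 'a 'a | Brc 'a

definition tgen_ok :: "('r, 'a) lie_alg \<Rightarrow> 'a set \<Rightarrow> nat \<Rightarrow> 'a tgen \<Rightarrow> bool" where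
  "tgen_ok L H q x = (case x of Tns h g \<Rightarrow> h \<in> H \<and> g \<in> lcarrier L
                               | Brc h \<Rightarrow> q \<ge> 1 \<and> h \<in> H)"

definition tensor_rels :: "('r::comm_ring_1, 'a) lie_alg \<Rightarrow> 'a set \<Rightarrow> nat
    \<Rightarrow> (('r, 'a tgen) lterm \<times> ('r, 'a tgen) lterm) set" where
  "tensor_rels L H q =
   (let C = lcarrier L; add = ladd L; sub = (\<lambda>x y. ladd L x (lneg L y)); sm = lsmul L; br = lbr L;
        T = (\<lambda>h g. Gen (Tns h g)); B = (\<lambda>h. Gen (Brc h)); qm = (\<lambda>x. lsmul L (of_nat q) x);
        tsub = (\<lambda>a b. LAdd a (LNeg b)) in
    {(LSmul r (T h g), T (sm r h) g) | r h g. h \<in> H \<and> g \<in> C} \<union>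
    {(LSmul r (T h g), T h (sm r g)) | r h g. h \<in> H \<and> g \<in> C} \<union>
    {(T (add h h') g, LAdd (T h g) (T h' g)) | h h' g. h \<in> H \<and> h' \<in> H \<and> g \<in> C} \<union>
    {(T h (add g g'), LAdd (T h g) (T h g')) | h g g'. h \<in> H \<and> g \<in> C \<and> g' \<in> C} \<union>
    {(T (br h h') g, tsub (T h (br h' g)) (T h' (br h g))) | h h' g. h \<in> H \<and> h' \<in> H \<and> g \<in> C} \<union>
    {(T h (br g g'), tsub (T (br g' h) g) (T (br g h) g')) | h g g'. h \<in> H \<and> g \<in> C \<and> g' \<in> C} \<union>
    {(LBr (T h g) (T h' g'), T (br h g) (br h' g')) | h g h' g'.
        h \<in> H \<and> g \<in> C \<and> h' \<in> H \<and> g' \<in> C} \<union>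
    (if q = 0 then {} else
    {(LBr (B h') (T h g), LAdd (T (br (qm h') h) g) (T h (br (qm h') g))) | h' h g.
        h' \<in> H \<and> h \<in> H \<and> g \<in> C} \<union>
    {(B (add (sm r h) (sm r' h')), LAdd (LSmul r (B h)) (LSmul r' (B h'))) | r r' h h'.
        h \<in> H \<and> h' \<in> H} \<union>
    {(LBr (B h) (B h'), T (qm h) (qm h')) | h h'. h \<in> H \<and> h' \<in> H} \<union>
    {(B (br h g), LSmul (of_nat q) (T h g)) | h g. h \<in> H \<and> g \<in> C}))"

definition exterior_rels :: "('r::comm_ring_1, 'a) lie_alg \<Rightarrow> 'a set \<Rightarrow> nat
    \<Rightarrow> (('r, 'a tgen) lterm \<times> ('r, 'a tgen) lterm) set" where
  "exterior_rels L H q = tensor_rels L H q \<union> {(Gen (Tns h h), LZero) | h. h \<in> H}"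

definition tensor_q :: "('r::comm_ring_1, 'a) lie_alg \<Rightarrow> 'a set \<Rightarrow> nat
    \<Rightarrow> ('r, ('r, 'a tgen) lterm set) lie_alg" where
  "tensor_q L H q = presented (tgen_ok L H q) (tensor_rels L H q)"

definition exterior_q :: "('r::comm_ring_1, 'a) lie_alg \<Rightarrow> 'a set \<Rightarrow> nat
    \<Rightarrow> ('r, ('r, 'a tgen) lterm set) lie_alg" where
  "exterior_q L H q = presented (tgen_ok L H q) (exterior_rels L H q)"

definition ext_incl :: "('r::comm_ring_1, 'a) lie_alg \<Rightarrow> nat
    \<Rightarrow> ('r, 'a tgen) lterm set \<Rightarrow> ('r, 'a tgen) lterm set" where
  "ext_incl L q = induced_map (exterior_rels L (lcarrier L) q) Gen"

definition ext_proj :: "('r::comm_ring_1, 'a) lie_alg \<Rightarrow> 'a set \<Rightarrow> nat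
    \<Rightarrow> ('r, 'a tgen) lterm set \<Rightarrow> ('r, 'a set tgen) lterm set" where
  "ext_proj L H q =
     (let Q = quotient_lie L H in
      induced_map (exterior_rels Q (lcarrier Q) q)
        (\<lambda>x. Gen (case x of Tns g g' \<Rightarrow> Tns (lcoset L H g) (lcoset L H g')
                         | Brc g \<Rightarrow> Brc (lcoset L H g))))"

end

theory Submission
  imports Defs
begin

text \<open>Let \<open>\<phi>\<close> be the map of presentations underlying
  \<open>\<gg> \<and>\<^sup>q \<gg> \<rightarrow> (\<gg>/\<hh>) \<and>\<^sup>q (\<gg>/\<hh>)\<close>, replacing every entry of a generator by its
  coset. It kills the generators of \<open>\<hh> \<and>\<^sup>q \<gg>\<close>, whose \<open>\<hh>\<close>-entry becomes zero, and choosing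
  coset representatives gives a map \<open>\<psi>\<close> on generators with \<open>\<phi> \<circ> \<psi> = id\<close>; this proves
  surjectivity and one inclusion. For the other one, let \<open>I\<close> be the image of \<open>\<hh> \<and>\<^sup>q \<gg>\<close>
  in \<open>\<gg> \<and>\<^sup>q \<gg>\<close>. Brackets of generators and the Jacobi identity show that \<open>I\<close> is an
  ideal. Changing a representative by an element of \<open>\<hh>\<close> changes a generator only modulo
  \<open>I\<close>, so \<open>\<psi> \<circ> \<phi>\<close> is the identity modulo \<open>I\<close>; and since every defining relation of the
  quotient is the \<open>\<phi>\<close>-image of a defining relation of \<open>\<gg> \<and>\<^sup>q \<gg>\<close>, \<open>\<psi>\<close> respects relations
  modulo \<open>I\<close>. Hence \<open>\<phi> t = 0\<close> forces \<open>t \<equiv> \<psi> (\<phi> t) \<equiv> 0\<close> modulo \<open>I\<close>, that is \<open>t \<in> I\<close>.\<close>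

section \<open>Congruence of Lie terms\<close>

declare lcong.trans [trans]

lemmas lcong_lie_axioms =
  lcong.add_assoc lcong.add_comm lcong.add_zero lcong.add_neg
  lcong.smul_one lcong.smul_mult lcong.smul_add_s lcong.smul_add_v
  lcong.br_add_l lcong.br_add_r lcong.br_smul_l lcong.br_smul_r lcong.br_alt lcong.jacobi

lemma lcong_add_left: "lcong R a a' \<Longrightarrow> lcong R (LAdd a b) (LAdd a' b)"
  by (rule lcong.cAdd) (auto intro: lcong.refl)

lemma lcong_add_right: "lcong R b b' \<Longrightarrow> lcong R (LAdd a b) (LAdd a b')"
  by (rule lcong.cAdd) (auto intro: lcong.refl)

lemma lcong_br_left: "lcong R a a' \<Longrightarrow> lcong R (LBr a b) (LBr a' b)"
  by (rule lcong.cBr) (auto intro: lcong.refl)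

lemma lcong_br_right: "lcong R b b' \<Longrightarrow> lcong R (LBr a b) (LBr a b')"
  by (rule lcong.cBr) (auto intro: lcong.refl)

lemma lcong_zero_add: "lcong R (LAdd LZero a) a"
  by (meson lcong.add_comm lcong.add_zero lcong.trans)

lemma lcong_neg_add_self: "lcong R (LAdd (LNeg a) a) LZero"
  by (meson lcong.add_comm lcong.add_neg lcong.trans)

lemma lcong_add_assoc_sym: "lcong R (LAdd a (LAdd b c)) (LAdd (LAdd a b) c)"
  by (rule lcong.sym, rule lcong.add_assoc)

lemma lcong_add_swap_middle: "lcong R (LAdd (LAdd a b) (LAdd c d)) (LAdd (LAdd a c) (LAdd b d))"
proof -
  have "lcong R (LAdd (LAdd a b) (LAdd c d)) (LAdd a (LAdd b (LAdd c d)))"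
    by (rule lcong.add_assoc)
  also have "lcong R \<dots> (LAdd a (LAdd (LAdd b c) d))"
    by (intro lcong_add_right lcong_add_assoc_sym)
  also have "lcong R \<dots> (LAdd a (LAdd (LAdd c b) d))"
    by (intro lcong_add_right lcong_add_left lcong.add_comm)
  also have "lcong R \<dots> (LAdd a (LAdd c (LAdd b d)))"
    by (intro lcong_add_right lcong.add_assoc)
  also have "lcong R \<dots> (LAdd (LAdd a c) (LAdd b d))"
    by (rule lcong_add_assoc_sym)
  finally show ?thesis .
qed

lemma lcong_add_neg_cancel: "lcong R (LAdd (LAdd a b) (LNeg b)) a"
proof -
  have "lcong R (LAdd (LAdd a b) (LNeg b)) (LAdd a (LAdd b (LNeg b)))" by (rule lcong.add_assoc)
  also have "lcong R \<dots> (LAdd a LZero)" by (intro lcong_add_right lcong.add_neg)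
  also have "lcong R \<dots> a" by (rule lcong.add_zero)
  finally show ?thesis .
qed

lemma lcong_eq_neg_if_add_eq_zero:
  assumes "lcong R (LAdd a b) LZero" shows "lcong R a (LNeg b)"
proof -
  have "lcong R a (LAdd (LAdd a b) (LNeg b))" by (rule lcong.sym, rule lcong_add_neg_cancel)
  also have "lcong R \<dots> (LAdd LZero (LNeg b))" by (intro lcong_add_left assms)
  also have "lcong R \<dots> (LNeg b)" by (rule lcong_zero_add)
  finally show ?thesis .
qed

lemma lcong_zero_if_eq_double:
  assumes "lcong R a (LAdd a a)" shows "lcong R a LZero"
proof -
  have "lcong R LZero (LAdd a (LNeg a))" by (rule lcong.sym, rule lcong.add_neg)
  also have "lcong R \<dots> (LAdd (LAdd a a) (LNeg a))" by (intro lcong_add_left assms)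
  also have "lcong R \<dots> (LAdd a (LAdd a (LNeg a)))" by (rule lcong.add_assoc)
  also have "lcong R \<dots> (LAdd a LZero)" by (intro lcong_add_right lcong.add_neg)
  also have "lcong R \<dots> a" by (rule lcong.add_zero)
  finally show ?thesis by (rule lcong.sym)
qed

lemma lcong_neg_add: "lcong R (LNeg (LAdd a b)) (LAdd (LNeg a) (LNeg b))"
proof -
  have "lcong R (LAdd (LAdd (LNeg a) (LNeg b)) (LAdd a b))
                (LAdd (LAdd (LNeg a) a) (LAdd (LNeg b) b))"
    by (rule lcong_add_swap_middle)
  also have "lcong R \<dots> (LAdd LZero LZero)"
    by (intro lcong.cAdd lcong_neg_add_self)
  also have "lcong R \<dots> LZero" by (rule lcong.add_zero)
  finally show ?thesis by (rule lcong.sym[OF lcong_eq_neg_if_add_eq_zero])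
qed

lemma lcong_neg_zero: "lcong R (LNeg LZero) LZero"
  by (meson lcong_zero_add lcong.add_neg lcong.sym lcong.trans)

lemma lcong_smul_zero: "lcong R (LSmul r LZero) LZero"
proof (rule lcong_zero_if_eq_double)
  have "lcong R (LSmul r LZero) (LSmul r (LAdd LZero LZero))"
    by (rule lcong.cSmul, rule lcong.sym, rule lcong.add_zero)
  also have "lcong R \<dots> (LAdd (LSmul r LZero) (LSmul r LZero))" by (rule lcong.smul_add_v)
  finally show "lcong R (LSmul r LZero) (LAdd (LSmul r LZero) (LSmul r LZero))" .
qed

lemma lcong_br_zero_right: "lcong R (LBr a LZero) LZero"
proof (rule lcong_zero_if_eq_double)
  have "lcong R (LBr a LZero) (LBr a (LAdd LZero LZero))"
    by (rule lcong_br_right, rule lcong.sym, rule lcong.add_zero)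
  also have "lcong R \<dots> (LAdd (LBr a LZero) (LBr a LZero))" by (rule lcong.br_add_r)
  finally show "lcong R (LBr a LZero) (LAdd (LBr a LZero) (LBr a LZero))" .
qed

lemma lcong_br_zero_left: "lcong R (LBr LZero a) LZero"
proof (rule lcong_zero_if_eq_double)
  have "lcong R (LBr LZero a) (LBr (LAdd LZero LZero) a)"
    by (rule lcong_br_left, rule lcong.sym, rule lcong.add_zero)
  also have "lcong R \<dots> (LAdd (LBr LZero a) (LBr LZero a))" by (rule lcong.br_add_l)
  finally show "lcong R (LBr LZero a) (LAdd (LBr LZero a) (LBr LZero a))" .
qed

lemma lcong_br_anticomm: "lcong R (LBr a b) (LNeg (LBr b a))"
proof (rule lcong_eq_neg_if_add_eq_zero)
  have "lcong R LZero (LBr (LAdd a b) (LAdd a b))" by (rule lcong.sym, rule lcong.br_alt)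
  also have "lcong R \<dots> (LAdd (LBr a (LAdd a b)) (LBr b (LAdd a b)))" by (rule lcong.br_add_l)
  also have "lcong R \<dots> (LAdd (LAdd (LBr a a) (LBr a b)) (LAdd (LBr b a) (LBr b b)))"
    by (intro lcong.cAdd lcong.br_add_r)
  also have "lcong R \<dots> (LAdd (LAdd LZero (LBr a b)) (LAdd (LBr b a) LZero))"
    by (intro lcong.cAdd lcong.br_alt lcong.refl)
  also have "lcong R \<dots> (LAdd (LBr a b) (LBr b a))"
    by (intro lcong.cAdd lcong_zero_add lcong.add_zero)
  finally show "lcong R (LAdd (LBr a b) (LBr b a)) LZero" by (rule lcong.sym)
qed

lemma lcong_br_neg_right: "lcong R (LBr a (LNeg b)) (LNeg (LBr a b))"
proof (rule lcong_eq_neg_if_add_eq_zero)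
  have "lcong R (LAdd (LBr a (LNeg b)) (LBr a b)) (LBr a (LAdd (LNeg b) b))"
    by (rule lcong.sym, rule lcong.br_add_r)
  also have "lcong R \<dots> (LBr a LZero)" by (intro lcong_br_right lcong_neg_add_self)
  also have "lcong R \<dots> LZero" by (rule lcong_br_zero_right)
  finally show "lcong R (LAdd (LBr a (LNeg b)) (LBr a b)) LZero" .
qed

lemma lcong_br_neg_left: "lcong R (LBr (LNeg a) b) (LNeg (LBr a b))"
proof (rule lcong_eq_neg_if_add_eq_zero)
  have "lcong R (LAdd (LBr (LNeg a) b) (LBr a b)) (LBr (LAdd (LNeg a) a) b)"
    by (rule lcong.sym, rule lcong.br_add_l)
  also have "lcong R \<dots> (LBr LZero b)" by (intro lcong_br_left lcong_neg_add_self)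
  also have "lcong R \<dots> LZero" by (rule lcong_br_zero_left)
  finally show "lcong R (LAdd (LBr (LNeg a) b) (LBr a b)) LZero" .
qed

lemma lcong_jacobi_neg:
  "lcong R (LBr a (LBr b c)) (LNeg (LAdd (LBr b (LBr c a)) (LBr c (LBr a b))))"
  by (rule lcong_eq_neg_if_add_eq_zero, rule lcong.jacobi)

lemma lcong_lterm_map:
  assumes "lcong R a b"
    and "\<And>s t. (s, t) \<in> R \<Longrightarrow> lcong R' (lterm_map f s) (lterm_map f t)"
  shows "lcong R' (lterm_map f a) (lterm_map f b)"
  using assms(1)
proof induction
  case (sym s t) from sym.IH show ?case by (rule lcong.sym)
next
  case (trans s t u) from trans.IH show ?case by (rule lcong.trans)
next
  case (cAdd a a' b b') then show ?case by (simp add: lcong.cAdd)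
next
  case (cNeg a a') then show ?case by (simp add: lcong.cNeg)
next
  case (cSmul a a' r) then show ?case by (simp add: lcong.cSmul)
next
  case (cBr a a' b b') then show ?case by (simp add: lcong.cBr)
qed (simp_all add: assms(2) lcong.refl lcong_lie_axioms)

lemma lterm_map_Gen [simp]: "lterm_map Gen t = t"
  by (induction t) auto

lemma lterm_map_lterm_map: "lterm_map f (lterm_map g t) = lterm_map (\<lambda>x. lterm_map f (g x)) t"
  by (induction t) auto

lemma lterm_map_cong: "(\<And>x. x \<in> lgens t \<Longrightarrow> f x = g x) \<Longrightarrow> lterm_map f t = lterm_map g t"
  by (induction t) auto

lemma lcong_mono: "lcong R a b \<Longrightarrow> R \<subseteq> R' \<Longrightarrow> lcong R' a b"
  using lcong_lterm_map[of R a b R' Gen] by (auto intro: lcong.rel)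

lemma pclass_eq_iff: "pclass R a = pclass R b \<longleftrightarrow> lcong R a b"
proof
  assume "pclass R a = pclass R b"
  then show "lcong R a b" unfolding pclass_def using lcong.refl[of R b] by blast
next
  assume "lcong R a b"
  then show "pclass R a = pclass R b"
    unfolding pclass_def by (blast intro: lcong.sym lcong.trans)
qed

lemma lcong_crep_pclass: "lcong R a (crep (pclass R a))"
  unfolding crep_def pclass_def using someI[of "lcong R a" a] lcong.refl[of R a] by simp

definition lterm_over :: "('x \<Rightarrow> bool) \<Rightarrow> ('r, 'x) lterm \<Rightarrow> bool" where
  "lterm_over P t \<longleftrightarrow> (\<forall>x\<in>lgens t. P x)"

lemma lterm_over_simps [simp]:
  "lterm_over P (Gen x) = P x"
  "lterm_over P LZero"
  "lterm_over P (LAdd a b) = (lterm_over P a \<and> lterm_over P b)"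
  "lterm_over P (LNeg a) = lterm_over P a"
  "lterm_over P (LSmul r a) = lterm_over P a"
  "lterm_over P (LBr a b) = (lterm_over P a \<and> lterm_over P b)"
  by (auto simp: lterm_over_def)

lemma lterm_over_mono: "(\<And>x. P x \<Longrightarrow> P' x) \<Longrightarrow> lterm_over P t \<Longrightarrow> lterm_over P' t"
  by (auto simp: lterm_over_def)

lemma lcong_lterm_map_zero:
  "(\<And>x. x \<in> lgens t \<Longrightarrow> lcong R (f x) LZero) \<Longrightarrow> lcong R (lterm_map f t) LZero"
proof (induction t)
  case (LAdd a b)
  then have "lcong R (lterm_map f (LAdd a b)) (LAdd LZero LZero)" by (simp add: lcong.cAdd)
  then show ?case using lcong.add_zero lcong.trans by blast
next
  case (LNeg a)
  then have "lcong R (lterm_map f (LNeg a)) (LNeg LZero)" by (simp add: lcong.cNeg)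
  then show ?case using lcong_neg_zero lcong.trans by blast
next
  case (LSmul r a)
  then have "lcong R (lterm_map f (LSmul r a)) (LSmul r LZero)" by (simp add: lcong.cSmul)
  then show ?case using lcong_smul_zero lcong.trans by blast
next
  case (LBr a b)
  then have "lcong R (lterm_map f (LBr a b)) (LBr LZero LZero)" by (simp add: lcong.cBr)
  then show ?case using lcong_br_zero_right lcong.trans by blast
qed (simp_all add: lcong.refl)

lemma exterior_q_carrier:
  "lcarrier (exterior_q L H q) =
     {pclass (exterior_rels L H q) t | t. lterm_over (tgen_ok L H q) t}"
  by (simp add: exterior_q_def presented_def lterm_over_def)

lemma exterior_q_zero: "lzero (exterior_q L H q) = pclass (exterior_rels L H q) LZero"
  by (simp add: exterior_q_def presented_def)

section \<open>Defining relations of the exterior product\<close>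

lemma tgen_ok_simps [simp]:
  "tgen_ok L H q (Tns h g) \<longleftrightarrow> h \<in> H \<and> g \<in> lcarrier L"
  "tgen_ok L H q (Brc h) \<longleftrightarrow> 1 \<le> q \<and> h \<in> H"
  by (auto simp: tgen_ok_def)

abbreviation tns :: "'a \<Rightarrow> 'a \<Rightarrow> ('r, 'a tgen) lterm" where
  "tns h g \<equiv> Gen (Tns h g)"

abbreviation brc :: "'a \<Rightarrow> ('r, 'a tgen) lterm" where
  "brc h \<equiv> Gen (Brc h)"

context
  fixes L :: "('r::comm_ring_1, 'a) lie_alg" and H :: "'a set" and q :: nat
begin

lemma exterior_rels_smul_Tns_left:
  "h \<in> H \<Longrightarrow> g \<in> lcarrier L \<Longrightarrow>
     (LSmul r (tns h g), tns (lsmul L r h) g) \<in> exterior_rels L H q"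
  and exterior_rels_smul_Tns_right:
  "h \<in> H \<Longrightarrow> g \<in> lcarrier L \<Longrightarrow>
     (LSmul r (tns h g), tns h (lsmul L r g)) \<in> exterior_rels L H q"
  and exterior_rels_Tns_add_left:
  "h \<in> H \<Longrightarrow> h' \<in> H \<Longrightarrow> g \<in> lcarrier L \<Longrightarrow>
     (tns (ladd L h h') g, LAdd (tns h g) (tns h' g)) \<in> exterior_rels L H q"
  and exterior_rels_Tns_add_right:
  "h \<in> H \<Longrightarrow> g \<in> lcarrier L \<Longrightarrow> g' \<in> lcarrier L \<Longrightarrow>
     (tns h (ladd L g g'), LAdd (tns h g) (tns h g')) \<in> exterior_rels L H q"
  and exterior_rels_Tns_br_left:
  "h \<in> H \<Longrightarrow> h' \<in> H \<Longrightarrow> g \<in> lcarrier L \<Longrightarrow>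
     (tns (lbr L h h') g, LAdd (tns h (lbr L h' g)) (LNeg (tns h' (lbr L h g))))
       \<in> exterior_rels L H q"
  and exterior_rels_Tns_br_right:
  "h \<in> H \<Longrightarrow> g \<in> lcarrier L \<Longrightarrow> g' \<in> lcarrier L \<Longrightarrow>
     (tns h (lbr L g g'), LAdd (tns (lbr L g' h) g) (LNeg (tns (lbr L g h) g')))
       \<in> exterior_rels L H q"
  and exterior_rels_br_Tns_Tns:
  "h \<in> H \<Longrightarrow> g \<in> lcarrier L \<Longrightarrow> h' \<in> H \<Longrightarrow> g' \<in> lcarrier L \<Longrightarrow>
     (LBr (tns h g) (tns h' g'), tns (lbr L h g) (lbr L h' g')) \<in> exterior_rels L H q"
  and exterior_rels_br_Brc_Tns:
  "0 < q \<Longrightarrow> h' \<in> H \<Longrightarrow> h \<in> H \<Longrightarrow> g \<in> lcarrier L \<Longrightarrow>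
     (LBr (brc h') (tns h g),
      LAdd (tns (lbr L (lsmul L (of_nat q) h') h) g) (tns h (lbr L (lsmul L (of_nat q) h') g)))
       \<in> exterior_rels L H q"
  and exterior_rels_Brc_linear:
  "0 < q \<Longrightarrow> h \<in> H \<Longrightarrow> h' \<in> H \<Longrightarrow>
     (brc (ladd L (lsmul L r h) (lsmul L r' h')), LAdd (LSmul r (brc h)) (LSmul r' (brc h')))
       \<in> exterior_rels L H q"
  and exterior_rels_br_Brc_Brc:
  "0 < q \<Longrightarrow> h \<in> H \<Longrightarrow> h' \<in> H \<Longrightarrow>
     (LBr (brc h) (brc h'), tns (lsmul L (of_nat q) h) (lsmul L (of_nat q) h'))
       \<in> exterior_rels L H q"
  and exterior_rels_Brc_br:
  "0 < q \<Longrightarrow> h \<in> H \<Longrightarrow> g \<in> lcarrier L \<Longrightarrow>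
     (brc (lbr L h g), LSmul (of_nat q) (tns h g)) \<in> exterior_rels L H q"
  and exterior_rels_Tns_self:
  "h \<in> H \<Longrightarrow> (tns h h, LZero) \<in> exterior_rels L H q"
  unfolding exterior_rels_def tensor_rels_def Let_def by simp_all

lemmas exterior_rels_intros =
  exterior_rels_smul_Tns_left exterior_rels_smul_Tns_right exterior_rels_Tns_add_left
  exterior_rels_Tns_add_right exterior_rels_Tns_br_left exterior_rels_Tns_br_right
  exterior_rels_br_Tns_Tns exterior_rels_br_Brc_Tns exterior_rels_Brc_linear
  exterior_rels_br_Brc_Brc exterior_rels_Brc_br exterior_rels_Tns_self

lemma exterior_rels_cases:
  assumes "(s, t) \<in> exterior_rels L H q"
  obtains
    (smul_Tns_left) r h g where "s = LSmul r (tns h g)" "t = tns (lsmul L r h) g"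
      "h \<in> H" "g \<in> lcarrier L"
  | (smul_Tns_right) r h g where "s = LSmul r (tns h g)" "t = tns h (lsmul L r g)"
      "h \<in> H" "g \<in> lcarrier L"
  | (Tns_add_left) h h' g where "s = tns (ladd L h h') g" "t = LAdd (tns h g) (tns h' g)"
      "h \<in> H" "h' \<in> H" "g \<in> lcarrier L"
  | (Tns_add_right) h g g' where "s = tns h (ladd L g g')" "t = LAdd (tns h g) (tns h g')"
      "h \<in> H" "g \<in> lcarrier L" "g' \<in> lcarrier L"
  | (Tns_br_left) h h' g where "s = tns (lbr L h h') g"
      "t = LAdd (tns h (lbr L h' g)) (LNeg (tns h' (lbr L h g)))"
      "h \<in> H" "h' \<in> H" "g \<in> lcarrier L"
  | (Tns_br_right) h g g' where "s = tns h (lbr L g g')"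
      "t = LAdd (tns (lbr L g' h) g) (LNeg (tns (lbr L g h) g'))"
      "h \<in> H" "g \<in> lcarrier L" "g' \<in> lcarrier L"
  | (br_Tns_Tns) h g h' g' where "s = LBr (tns h g) (tns h' g')" "t = tns (lbr L h g) (lbr L h' g')"
      "h \<in> H" "g \<in> lcarrier L" "h' \<in> H" "g' \<in> lcarrier L"
  | (br_Brc_Tns) h' h g where "0 < q" "s = LBr (brc h') (tns h g)"
      "t = LAdd (tns (lbr L (lsmul L (of_nat q) h') h) g) (tns h (lbr L (lsmul L (of_nat q) h') g))"
      "h' \<in> H" "h \<in> H" "g \<in> lcarrier L"
  | (Brc_linear) r r' h h' where "0 < q" "s = brc (ladd L (lsmul L r h) (lsmul L r' h'))"
      "t = LAdd (LSmul r (brc h)) (LSmul r' (brc h'))" "h \<in> H" "h' \<in> H"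
  | (br_Brc_Brc) h h' where "0 < q" "s = LBr (brc h) (brc h')"
      "t = tns (lsmul L (of_nat q) h) (lsmul L (of_nat q) h')" "h \<in> H" "h' \<in> H"
  | (Brc_br) h g where "0 < q" "s = brc (lbr L h g)" "t = LSmul (of_nat q) (tns h g)"
      "h \<in> H" "g \<in> lcarrier L"
  | (Tns_self) h where "s = tns h h" "t = LZero" "h \<in> H"
  using assms unfolding exterior_rels_def tensor_rels_def Let_def
  by (simp split: if_splits) (elim disjE exE conjE; (rule that; assumption))+

end

lemma exterior_rels_mono: "H \<subseteq> H' \<Longrightarrow> exterior_rels L H q \<subseteq> exterior_rels L H' q"
  unfolding exterior_rels_def tensor_rels_def Let_def by auto

section \<open>Cosets of an ideal and the quotient Lie algebra\<close>

locale lie_algebra_ideal =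
  fixes L :: "('r::comm_ring_1, 'a) lie_alg" and H :: "'a set"
  assumes is_lie_algebra: "lie_algebra L" and is_ideal: "lie_ideal L H"
begin

abbreviation "G \<equiv> lcarrier L"
abbreviation "add \<equiv> ladd L"
abbreviation "neg \<equiv> lneg L"
abbreviation "smul \<equiv> lsmul L"
abbreviation "br \<equiv> lbr L"
abbreviation "zero \<equiv> lzero L"
abbreviation "coset \<equiv> lcoset L H"

lemma zero_mem: "zero \<in> G"
  and add_mem: "x \<in> G \<Longrightarrow> y \<in> G \<Longrightarrow> add x y \<in> G"
  and neg_mem: "x \<in> G \<Longrightarrow> neg x \<in> G"
  and smul_mem: "x \<in> G \<Longrightarrow> smul r x \<in> G"
  and br_mem: "x \<in> G \<Longrightarrow> y \<in> G \<Longrightarrow> br x y \<in> G"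
  and lie_add_assoc: "x \<in> G \<Longrightarrow> y \<in> G \<Longrightarrow> w \<in> G \<Longrightarrow> add (add x y) w = add x (add y w)"
  and lie_add_comm: "x \<in> G \<Longrightarrow> y \<in> G \<Longrightarrow> add x y = add y x"
  and lie_add_zero: "x \<in> G \<Longrightarrow> add x zero = x"
  and lie_add_neg: "x \<in> G \<Longrightarrow> add x (neg x) = zero"
  and lie_smul_one: "x \<in> G \<Longrightarrow> smul 1 x = x"
  and lie_smul_add: "x \<in> G \<Longrightarrow> y \<in> G \<Longrightarrow> smul r (add x y) = add (smul r x) (smul r y)"
  and lie_br_add_left:
    "x \<in> G \<Longrightarrow> y \<in> G \<Longrightarrow> w \<in> G \<Longrightarrow> br (add x y) w = add (br x w) (br y w)"
  and lie_br_add_right: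
    "x \<in> G \<Longrightarrow> y \<in> G \<Longrightarrow> w \<in> G \<Longrightarrow> br w (add x y) = add (br w x) (br w y)"
  and lie_br_self: "x \<in> G \<Longrightarrow> br x x = zero"
  using is_lie_algebra unfolding lie_algebra_def Let_def by auto

lemma ideal_subset: "H \<subseteq> G"
  and ideal_mem_carrier: "x \<in> H \<Longrightarrow> x \<in> G"
  and ideal_zero_mem: "zero \<in> H"
  and ideal_add_mem: "x \<in> H \<Longrightarrow> y \<in> H \<Longrightarrow> add x y \<in> H"
  and ideal_neg_mem: "x \<in> H \<Longrightarrow> neg x \<in> H"
  and ideal_smul_mem: "x \<in> H \<Longrightarrow> smul r x \<in> H"
  and br_ideal_mem: "x \<in> G \<Longrightarrow> h \<in> H \<Longrightarrow> br x h \<in> H"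
  using is_ideal unfolding lie_ideal_def by auto

lemma lie_zero_add: "x \<in> G \<Longrightarrow> add zero x = x"
  by (metis lie_add_comm lie_add_zero zero_mem)

lemma lie_eq_neg_if_add_eq_zero:
  assumes "x \<in> G" "y \<in> G" "add x y = zero" shows "x = neg y"
proof -
  have "x = add x (add y (neg y))" using assms by (simp add: lie_add_neg lie_add_zero)
  also have "\<dots> = add (add x y) (neg y)" using assms(1,2) by (simp add: lie_add_assoc neg_mem)
  finally show ?thesis using assms by (simp add: lie_zero_add neg_mem)
qed

lemma lie_br_anticomm:
  assumes "x \<in> G" "y \<in> G" shows "br x y = neg (br y x)"
proof (rule lie_eq_neg_if_add_eq_zero)
  have "zero = br (add x y) (add x y)" using assms by (simp add: lie_br_self add_mem)
  also have "\<dots> = add (add (br x x) (br x y)) (add (br y x) (br y y))"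
    using assms lie_br_add_left[of x y "add x y"] lie_br_add_right[of x y x]
      lie_br_add_right[of x y y] add_mem by simp
  also have "\<dots> = add (br x y) (br y x)"
    using assms by (simp add: lie_br_self lie_add_zero lie_zero_add br_mem)
  finally show "add (br x y) (br y x) = zero" by simp
qed (use assms br_mem in auto)

lemma ideal_br_mem: "h \<in> H \<Longrightarrow> y \<in> G \<Longrightarrow> br h y \<in> H"
  using lie_br_anticomm ideal_mem_carrier br_ideal_mem ideal_neg_mem by metis

lemma coset_eq: "coset x = {add x h | h. h \<in> H}"
  by (simp add: lcoset_def)

lemma mem_coset_self: "x \<in> G \<Longrightarrow> x \<in> coset x"
  unfolding coset_eq using ideal_zero_mem lie_add_zero by force

lemma coset_subset: "x \<in> G \<Longrightarrow> coset x \<subseteq> G"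
  unfolding coset_eq using ideal_mem_carrier add_mem by auto

lemma coset_add_ideal:
  assumes "x \<in> G" "h \<in> H" shows "coset (add x h) = coset x"
proof
  show "coset (add x h) \<subseteq> coset x"
    unfolding coset_eq using assms
    by (auto simp: lie_add_assoc ideal_mem_carrier intro!: ideal_add_mem)
  show "coset x \<subseteq> coset (add x h)"
  proof
    fix y assume "y \<in> coset x"
    then obtain k where k: "k \<in> H" "y = add x k" unfolding coset_eq by auto
    have hG: "h \<in> G" "neg h \<in> G" "k \<in> G"
      using assms k ideal_mem_carrier ideal_neg_mem by auto
    have "y = add (add x h) (add (neg h) k)"
      using assms k hG by (simp add: lie_add_assoc add_mem lie_add_neg lie_zero_add
          flip: lie_add_assoc[of h "neg h" k])
    moreover have "add (neg h) k \<in> H" using assms k by (intro ideal_add_mem ideal_neg_mem)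
    ultimately show "y \<in> coset (add x h)" unfolding coset_eq by blast
  qed
qed

lemma coset_eq_if_mem: "x \<in> G \<Longrightarrow> y \<in> coset x \<Longrightarrow> coset y = coset x"
  unfolding coset_eq using coset_add_ideal[unfolded coset_eq] by blast

lemma crep_coset_mem: "x \<in> G \<Longrightarrow> crep (coset x) \<in> coset x"
  unfolding crep_def using mem_coset_self by (meson someI)

lemma crep_coset_carrier: "x \<in> G \<Longrightarrow> crep (coset x) \<in> G"
  using crep_coset_mem coset_subset by blast

lemma coset_crep_coset: "x \<in> G \<Longrightarrow> coset (crep (coset x)) = coset x"
  using crep_coset_mem coset_eq_if_mem by blast

lemma coset_eqE:
  assumes "y \<in> G" "coset x = coset y"
  obtains h where "h \<in> H" "y = add x h"
  using assms mem_coset_self[of y] unfolding coset_eq by auto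

lemma coset_ideal: "h \<in> H \<Longrightarrow> coset h = coset zero"
  using coset_add_ideal[of zero h] by (simp add: lie_zero_add ideal_mem_carrier zero_mem)

lemma coset_add_cong:
  assumes "x \<in> G" "x' \<in> G" "y \<in> G" "y' \<in> G" "coset x = coset x'" "coset y = coset y'"
  shows "coset (add x y) = coset (add x' y')"
proof -
  obtain h k where hk: "h \<in> H" "x' = add x h" "k \<in> H" "y' = add y k"
    using assms coset_eqE by metis
  have "add x' y' = add x (add h y')"
    using assms hk by (simp add: lie_add_assoc ideal_mem_carrier)
  also have "\<dots> = add (add x y') h"
    using assms hk by (simp add: lie_add_assoc lie_add_comm ideal_mem_carrier)
  finally have "add x' y' = add (add x y') h" .
  moreover have "add x y' = add (add x y) k"
    using assms hk by (simp add: lie_add_assoc ideal_mem_carrier)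
  ultimately show ?thesis
    using assms hk by (simp add: coset_add_ideal add_mem ideal_mem_carrier)
qed

lemma coset_smul_cong:
  assumes "x \<in> G" "x' \<in> G" "coset x = coset x'"
  shows "coset (smul r x) = coset (smul r x')"
proof -
  obtain h where h: "h \<in> H" "x' = add x h" using assms coset_eqE by metis
  then have "smul r x' = add (smul r x) (smul r h)"
    using assms by (simp add: lie_smul_add ideal_mem_carrier)
  then show ?thesis using assms h by (simp add: coset_add_ideal smul_mem ideal_smul_mem)
qed

lemma coset_br_cong:
  assumes "x \<in> G" "x' \<in> G" "y \<in> G" "y' \<in> G" "coset x = coset x'" "coset y = coset y'"
  shows "coset (br x y) = coset (br x' y')"
proof -
  obtain h k where hk: "h \<in> H" "x' = add x h" "k \<in> H" "y' = add y k"
    using assms coset_eqE by metis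
  have "br x' y' = add (br x y') (br h y')"
    using assms hk by (simp add: lie_br_add_left ideal_mem_carrier)
  moreover have "br x y' = add (br x y) (br x k)"
    using assms hk by (simp add: lie_br_add_right ideal_mem_carrier)
  ultimately show ?thesis
    using assms hk
    by (simp add: coset_add_ideal add_mem br_mem br_ideal_mem ideal_br_mem ideal_mem_carrier)
qed

abbreviation "Q \<equiv> quotient_lie L H"

lemma quotient_carrier: "lcarrier Q = coset ` G"
  by (simp add: quotient_lie_def)

lemma quotient_add: "x \<in> G \<Longrightarrow> y \<in> G \<Longrightarrow> ladd Q (coset x) (coset y) = coset (add x y)"
  unfolding quotient_lie_def
  by (simp, intro coset_add_cong) (simp_all add: crep_coset_carrier coset_crep_coset)

lemma quotient_smul: "x \<in> G \<Longrightarrow> lsmul Q r (coset x) = coset (smul r x)"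
  unfolding quotient_lie_def
  by (simp, intro coset_smul_cong) (simp_all add: crep_coset_carrier coset_crep_coset)

lemma quotient_br: "x \<in> G \<Longrightarrow> y \<in> G \<Longrightarrow> lbr Q (coset x) (coset y) = coset (br x y)"
  unfolding quotient_lie_def
  by (simp, intro coset_br_cong) (simp_all add: crep_coset_carrier coset_crep_coset)

lemma coset_mem_quotient [simp]: "x \<in> G \<Longrightarrow> coset x \<in> lcarrier Q"
  by (simp add: quotient_carrier)

lemma crep_quotient_mem: "X \<in> lcarrier Q \<Longrightarrow> crep X \<in> G"
  using crep_coset_carrier by (auto simp: quotient_carrier)

lemma coset_crep_quotient: "X \<in> lcarrier Q \<Longrightarrow> coset (crep X) = X"
  using coset_crep_coset by (auto simp: quotient_carrier)

end

section \<open>The image of \<open>\<hh> \<and>\<^sup>q \<gg>\<close> is an ideal\<close>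

locale lie_algebra_ideal_exterior = lie_algebra_ideal L H
  for L :: "('r::comm_ring_1, 'a) lie_alg" and H +
  fixes q :: nat
begin

abbreviation "RG \<equiv> exterior_rels L G q"
abbreviation "over_G \<equiv> lterm_over (tgen_ok L G q)"
abbreviation "over_H \<equiv> lterm_over (tgen_ok L H q)"
abbreviation "qsmul x \<equiv> smul (of_nat q) x"

lemma lcong_Tns_anticomm:
  assumes "x \<in> G" "y \<in> G" shows "lcong RG (tns x y) (LNeg (tns y x))"
proof (rule lcong_eq_neg_if_add_eq_zero)
  have xy: "add x y \<in> G" using assms add_mem by auto
  have "lcong RG LZero (tns (add x y) (add x y))"
    using xy by (rule lcong.sym[OF lcong.rel[OF exterior_rels_Tns_self]])
  also have "lcong RG \<dots> (LAdd (tns x (add x y)) (tns y (add x y)))"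
    using assms xy by (intro lcong.rel exterior_rels_Tns_add_left)
  also have "lcong RG \<dots> (LAdd (LAdd (tns x x) (tns x y)) (LAdd (tns y x) (tns y y)))"
    using assms by (intro lcong.cAdd lcong.rel exterior_rels_Tns_add_right)
  also have "lcong RG \<dots> (LAdd (LAdd LZero (tns x y)) (LAdd (tns y x) LZero))"
    using assms by (intro lcong.cAdd lcong.rel exterior_rels_Tns_self lcong.refl)
  also have "lcong RG \<dots> (LAdd (tns x y) (tns y x))"
    by (intro lcong.cAdd lcong_zero_add lcong.add_zero)
  finally show "lcong RG (LAdd (tns x y) (tns y x)) LZero" by (rule lcong.sym)
qed

lemma over_G_if_over_H: "over_H t \<Longrightarrow> over_G t"
  by (erule lterm_over_mono[rotated])
    (auto simp: tgen_ok_def ideal_mem_carrier split: tgen.splits)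

definition in_image :: "('r, 'a tgen) lterm \<Rightarrow> bool" where
  "in_image x \<longleftrightarrow> (\<exists>v. over_H v \<and> lcong RG x v)"

lemma in_image_if_over_H: "over_H v \<Longrightarrow> in_image v"
  unfolding in_image_def using lcong.refl by blast

lemma in_image_lcong: "lcong RG x y \<Longrightarrow> in_image y \<Longrightarrow> in_image x"
  unfolding in_image_def using lcong.trans by blast

lemma in_image_zero: "in_image LZero"
  by (simp add: in_image_if_over_H)

lemma in_image_add: "in_image x \<Longrightarrow> in_image y \<Longrightarrow> in_image (LAdd x y)"
  unfolding in_image_def by (metis lcong.cAdd lterm_over_simps(3))

lemma in_image_neg: "in_image x \<Longrightarrow> in_image (LNeg x)"
  unfolding in_image_def by (metis lcong.cNeg lterm_over_simps(4))

lemma in_image_smul: "in_image x \<Longrightarrow> in_image (LSmul r x)"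
  unfolding in_image_def by (metis lcong.cSmul lterm_over_simps(5))

lemma in_image_br: "in_image x \<Longrightarrow> in_image y \<Longrightarrow> in_image (LBr x y)"
  unfolding in_image_def by (metis lcong.cBr lterm_over_simps(6))

lemma in_image_br_Gen_Gen:
  assumes "tgen_ok L H q h" "tgen_ok L G q g"
  shows "in_image (LBr (Gen h) (Gen g))"
proof (cases h)
  case h: (Tns c d)
  show ?thesis
  proof (cases g)
    case g: (Tns a b)
    with assms h have "c \<in> H" "d \<in> G" "a \<in> G" "b \<in> G" by auto
    then show ?thesis unfolding g h
      by (intro in_image_lcong[OF lcong.rel[OF exterior_rels_br_Tns_Tns]] in_image_if_over_H)
        (simp_all add: ideal_mem_carrier ideal_br_mem br_mem)
  next
    case g: (Brc a)
    with assms h have c: "c \<in> H" "d \<in> G" "a \<in> G" "0 < q" by auto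
    have "lcong RG (LBr (Gen h) (Gen g)) (LNeg (LBr (brc a) (tns c d)))"
      unfolding g h by (rule lcong_br_anticomm)
    also have "lcong RG \<dots> (LNeg (LAdd (tns (br (qsmul a) c) d) (tns c (br (qsmul a) d))))"
      using c ideal_mem_carrier by (intro lcong.cNeg lcong.rel exterior_rels_br_Brc_Tns)
    finally show ?thesis
      by (rule in_image_lcong) (intro in_image_neg in_image_if_over_H,
          simp add: c br_ideal_mem br_mem smul_mem)
  qed
next
  case h: (Brc c)
  show ?thesis
  proof (cases g)
    case g: (Tns a b)
    with assms h have c: "c \<in> H" "a \<in> G" "b \<in> G" "0 < q" by auto
    then have qc: "qsmul c \<in> H" "qsmul c \<in> G"
      using ideal_smul_mem smul_mem ideal_mem_carrier by auto
    have "lcong RG (LBr (Gen h) (Gen g)) (LAdd (tns (br (qsmul c) a) b) (tns a (br (qsmul c) b)))"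
      unfolding g h using c ideal_mem_carrier by (intro lcong.rel exterior_rels_br_Brc_Tns)
    also have "lcong RG \<dots> (LAdd (tns (br (qsmul c) a) b) (LNeg (tns (br (qsmul c) b) a)))"
      using c qc by (intro lcong_add_right lcong_Tns_anticomm br_mem)
    finally show ?thesis
      by (rule in_image_lcong) (intro in_image_add in_image_neg in_image_if_over_H,
          simp_all add: c qc ideal_br_mem)
  next
    case g: (Brc a)
    with assms h have "c \<in> H" "a \<in> G" "0 < q" by auto
    then show ?thesis unfolding g h
      by (intro in_image_lcong[OF lcong.rel[OF exterior_rels_br_Brc_Brc]] in_image_if_over_H)
        (simp_all add: ideal_mem_carrier ideal_smul_mem smul_mem)
  qed
qed

lemma in_image_br_swap:
  "in_image (LBr s x) \<Longrightarrow> in_image (LBr x s)"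
  by (rule in_image_lcong[OF lcong_br_anticomm in_image_neg])

lemma in_image_br_Gen_over_H:
  assumes "tgen_ok L G q g" "over_H u"
  shows "in_image (LBr (Gen g) u)"
  using assms(2)
proof (induction u)
  case (Gen h) then show ?case using in_image_br_Gen_Gen assms(1) in_image_br_swap by simp
next
  case LZero show ?case by (rule in_image_lcong[OF lcong_br_zero_right in_image_zero])
next
  case (LAdd u1 u2) then show ?case
    by (auto intro: in_image_lcong[OF lcong.br_add_r] in_image_add)
next
  case (LNeg u) then show ?case
    by (auto intro: in_image_lcong[OF lcong_br_neg_right] in_image_neg)
next
  case (LSmul r u) then show ?case
    by (auto intro: in_image_lcong[OF lcong.br_smul_r] in_image_smul)
next
  case (LBr u1 u2)
  then have "in_image (LBr u2 (Gen g))" "in_image (LBr (Gen g) u1)" "in_image u1" "in_image u2"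
    by (auto intro: in_image_br_swap in_image_if_over_H)
  then have "in_image (LNeg (LAdd (LBr u1 (LBr u2 (Gen g))) (LBr u2 (LBr (Gen g) u1))))"
    by (blast intro: in_image_neg in_image_add in_image_br)
  then show ?case by (rule in_image_lcong[OF lcong_jacobi_neg])
qed

lemma in_image_br_if_br_over_H:
  assumes "\<And>u. over_H u \<Longrightarrow> in_image (LBr s u)" "in_image x"
  shows "in_image (LBr s x)"
proof -
  obtain v where "over_H v" "lcong RG x v" using assms(2) unfolding in_image_def by blast
  then show ?thesis by (intro in_image_lcong[OF lcong_br_right assms(1)])
qed

lemma in_image_br_over_H:
  assumes "over_G s" "over_H u" shows "in_image (LBr s u)"
  using assms
proof (induction s arbitrary: u)
  case (Gen g) then show ?case by (simp add: in_image_br_Gen_over_H)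
next
  case LZero show ?case by (rule in_image_lcong[OF lcong_br_zero_left in_image_zero])
next
  case (LAdd s1 s2) then show ?case
    by (auto intro: in_image_lcong[OF lcong.br_add_l] in_image_add)
next
  case (LNeg s) then show ?case
    by (auto intro: in_image_lcong[OF lcong_br_neg_left] in_image_neg)
next
  case (LSmul r s) then show ?case
    by (auto intro: in_image_lcong[OF lcong.br_smul_l] in_image_smul)
next
  case (LBr s1 s2)
  have IH1: "\<And>u. over_H u \<Longrightarrow> in_image (LBr s1 u)"
    and IH2: "\<And>u. over_H u \<Longrightarrow> in_image (LBr s2 u)"
    using LBr by auto
  have "in_image (LBr s1 (LBr s2 u))"
    by (rule in_image_br_if_br_over_H[OF IH1 IH2[OF LBr.prems(2)]])
  moreover have "in_image (LBr s2 (LBr u s1))"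
    by (rule in_image_br_if_br_over_H[OF IH2 in_image_br_swap[OF IH1[OF LBr.prems(2)]]])
  ultimately have "in_image (LNeg (LNeg (LAdd (LBr s1 (LBr s2 u)) (LBr s2 (LBr u s1)))))"
    by (intro in_image_neg in_image_add)
  then have "in_image (LNeg (LBr u (LBr s1 s2)))"
    by (rule in_image_lcong[OF lcong.cNeg[OF lcong_jacobi_neg]])
  then show ?case by (rule in_image_lcong[OF lcong_br_anticomm])
qed

lemma in_image_br_over_G_left: "over_G s \<Longrightarrow> in_image x \<Longrightarrow> in_image (LBr s x)"
  by (rule in_image_br_if_br_over_H[OF in_image_br_over_H])

lemma in_image_br_over_G_right: "over_G s \<Longrightarrow> in_image x \<Longrightarrow> in_image (LBr x s)"
  by (rule in_image_br_swap[OF in_image_br_over_G_left])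

section \<open>Congruence modulo the image\<close>

definition cong_mod_image :: "('r, 'a tgen) lterm \<Rightarrow> ('r, 'a tgen) lterm \<Rightarrow> bool" where
  "cong_mod_image s t \<longleftrightarrow> (\<exists>x. in_image x \<and> lcong RG s (LAdd t x))"

lemma cong_mod_imageI: "in_image x \<Longrightarrow> lcong RG s (LAdd t x) \<Longrightarrow> cong_mod_image s t"
  unfolding cong_mod_image_def by blast

lemma cong_mod_imageE:
  assumes "cong_mod_image s t"
  obtains x where "in_image x" "lcong RG s (LAdd t x)"
  using assms unfolding cong_mod_image_def by blast

lemma cong_mod_image_if_lcong: "lcong RG s t \<Longrightarrow> cong_mod_image s t"
  by (rule cong_mod_imageI[OF in_image_zero])
    (meson lcong.add_zero lcong.sym lcong.trans)

lemma cong_mod_image_sym: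
  assumes "cong_mod_image s t" shows "cong_mod_image t s"
proof -
  obtain x where x: "in_image x" "lcong RG s (LAdd t x)" using assms by (rule cong_mod_imageE)
  have "lcong RG t (LAdd (LAdd t x) (LNeg x))" by (rule lcong.sym, rule lcong_add_neg_cancel)
  also have "lcong RG \<dots> (LAdd s (LNeg x))" by (rule lcong_add_left, rule lcong.sym, fact)
  finally show ?thesis by (rule cong_mod_imageI[rotated]) (intro in_image_neg x)
qed

lemma cong_mod_image_trans [trans]:
  assumes "cong_mod_image s t" "cong_mod_image t w" shows "cong_mod_image s w"
proof -
  obtain x where x: "in_image x" "lcong RG s (LAdd t x)" using assms(1) by (rule cong_mod_imageE)
  obtain y where y: "in_image y" "lcong RG t (LAdd w y)" using assms(2) by (rule cong_mod_imageE)
  have "lcong RG s (LAdd (LAdd w y) x)" using x y by (meson lcong_add_left lcong.trans)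
  also have "lcong RG \<dots> (LAdd w (LAdd y x))" by (rule lcong.add_assoc)
  finally show ?thesis by (rule cong_mod_imageI[rotated]) (intro in_image_add x y)
qed

lemma cong_mod_image_add:
  assumes "cong_mod_image a a'" "cong_mod_image b b'"
  shows "cong_mod_image (LAdd a b) (LAdd a' b')"
proof -
  obtain x where x: "in_image x" "lcong RG a (LAdd a' x)" using assms(1) by (rule cong_mod_imageE)
  obtain y where y: "in_image y" "lcong RG b (LAdd b' y)" using assms(2) by (rule cong_mod_imageE)
  have "lcong RG (LAdd a b) (LAdd (LAdd a' x) (LAdd b' y))" using x(2) y(2) by (rule lcong.cAdd)
  also have "lcong RG \<dots> (LAdd (LAdd a' b') (LAdd x y))" by (rule lcong_add_swap_middle)
  finally show ?thesis by (rule cong_mod_imageI[rotated]) (intro in_image_add x y)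
qed

lemma cong_mod_image_neg:
  assumes "cong_mod_image a a'" shows "cong_mod_image (LNeg a) (LNeg a')"
proof -
  obtain x where x: "in_image x" "lcong RG a (LAdd a' x)" using assms by (rule cong_mod_imageE)
  have "lcong RG (LNeg a) (LNeg (LAdd a' x))" using x by (intro lcong.cNeg)
  also have "lcong RG \<dots> (LAdd (LNeg a') (LNeg x))" by (rule lcong_neg_add)
  finally show ?thesis by (rule cong_mod_imageI[rotated]) (intro in_image_neg x)
qed

lemma cong_mod_image_smul:
  assumes "cong_mod_image a a'" shows "cong_mod_image (LSmul r a) (LSmul r a')"
proof -
  obtain x where x: "in_image x" "lcong RG a (LAdd a' x)" using assms by (rule cong_mod_imageE)
  have "lcong RG (LSmul r a) (LSmul r (LAdd a' x))" using x by (intro lcong.cSmul)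
  also have "lcong RG \<dots> (LAdd (LSmul r a') (LSmul r x))" by (rule lcong.smul_add_v)
  finally show ?thesis by (rule cong_mod_imageI[rotated]) (intro in_image_smul x)
qed

lemma cong_mod_image_br:
  assumes "cong_mod_image a a'" "cong_mod_image b b'" "over_G a'" "over_G b'"
  shows "cong_mod_image (LBr a b) (LBr a' b')"
proof -
  obtain x where x: "in_image x" "lcong RG a (LAdd a' x)" using assms(1) by (rule cong_mod_imageE)
  obtain y where y: "in_image y" "lcong RG b (LAdd b' y)" using assms(2) by (rule cong_mod_imageE)
  have "lcong RG (LBr a b) (LBr (LAdd a' x) (LAdd b' y))" using x(2) y(2) by (rule lcong.cBr)
  also have "lcong RG \<dots> (LAdd (LBr a' (LAdd b' y)) (LBr x (LAdd b' y)))" by (rule lcong.br_add_l)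
  also have "lcong RG \<dots> (LAdd (LAdd (LBr a' b') (LBr a' y)) (LAdd (LBr x b') (LBr x y)))"
    by (intro lcong.cAdd lcong.br_add_r)
  also have "lcong RG \<dots> (LAdd (LBr a' b') (LAdd (LBr a' y) (LAdd (LBr x b') (LBr x y))))"
    by (rule lcong.add_assoc)
  finally show ?thesis
    by (rule cong_mod_imageI[rotated])
      (intro in_image_add in_image_br in_image_br_over_G_left in_image_br_over_G_right
        x y assms(3,4))
qed

lemma in_image_if_cong_mod_image_zero:
  assumes "cong_mod_image t LZero" shows "in_image t"
proof -
  obtain x where x: "in_image x" "lcong RG t (LAdd LZero x)" using assms by (rule cong_mod_imageE)
  then show ?thesis by (meson in_image_lcong lcong_zero_add lcong.trans)
qed

lemma cong_mod_image_Tns_coset: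
  assumes "x \<in> G" "x' \<in> G" "y \<in> G" "y' \<in> G" "coset x = coset x'" "coset y = coset y'"
  shows "cong_mod_image (tns x' y') (tns x y)"
proof -
  obtain h k where hk: "h \<in> H" "x' = add x h" "k \<in> H" "y' = add y k"
    using assms coset_eqE by metis
  then have hkG: "h \<in> G" "k \<in> G" by (simp_all add: ideal_mem_carrier)
  have "lcong RG (tns x' y') (LAdd (tns x y') (tns h y'))"
    unfolding hk(2) using assms hkG by (intro lcong.rel exterior_rels_Tns_add_left)
  also have "lcong RG \<dots> (LAdd (LAdd (tns x y) (tns x k)) (tns h y'))"
    unfolding hk(4) using assms hkG by (intro lcong_add_left lcong.rel exterior_rels_Tns_add_right)
  also have "lcong RG \<dots> (LAdd (tns x y) (LAdd (tns x k) (tns h y')))"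
    by (rule lcong.add_assoc)
  finally show ?thesis
  proof (rule cong_mod_imageI[rotated], intro in_image_add)
    have "lcong RG (tns x k) (LNeg (tns k x))" using assms(1) hkG(2) by (rule lcong_Tns_anticomm)
    then show "in_image (tns x k)"
      by (rule in_image_lcong) (intro in_image_neg in_image_if_over_H, simp add: hk assms)
    show "in_image (tns h y')" using assms hk by (intro in_image_if_over_H) simp
  qed
qed

lemma cong_mod_image_Brc_coset:
  assumes "0 < q" "x \<in> G" "x' \<in> G" "coset x = coset x'"
  shows "cong_mod_image (brc x') (brc x)"
proof -
  obtain h where h: "h \<in> H" "x' = add x h" using assms coset_eqE by metis
  then have "x' = add (smul 1 x) (smul 1 h)"
    using assms by (simp add: lie_smul_one ideal_mem_carrier)
  then have "lcong RG (brc x') (LAdd (LSmul 1 (brc x)) (LSmul 1 (brc h)))"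
    using assms h ideal_mem_carrier by (simp add: lcong.rel exterior_rels_Brc_linear)
  also have "lcong RG \<dots> (LAdd (brc x) (brc h))" by (intro lcong.cAdd lcong.smul_one)
  finally show ?thesis
    by (rule cong_mod_imageI[rotated]) (rule in_image_if_over_H, use assms h in auto)
qed

section \<open>Projection and lift of generators\<close>

abbreviation "GQ \<equiv> lcarrier Q"
abbreviation "RQ \<equiv> exterior_rels Q GQ q"
abbreviation "RH \<equiv> exterior_rels L H q"
abbreviation "over_Q \<equiv> lterm_over (tgen_ok Q GQ q)"

definition proj_gen :: "'a tgen \<Rightarrow> ('r, 'a set tgen) lterm" where
  "proj_gen x = Gen (case x of Tns g g' \<Rightarrow> Tns (coset g) (coset g') | Brc g \<Rightarrow> Brc (coset g))"

text \<open>Off the generators of the quotient the value is irrelevant; \<open>LZero\<close> keeps every lift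
  a term over \<open>G\<close>.\<close>
definition lift_gen :: "'a set tgen \<Rightarrow> ('r, 'a tgen) lterm" where
  "lift_gen X =
     (if tgen_ok Q GQ q X
      then Gen (case X of Tns A B \<Rightarrow> Tns (crep A) (crep B) | Brc A \<Rightarrow> Brc (crep A))
      else LZero)"

lemma proj_gen_simps [simp]:
  "proj_gen (Tns g g') = tns (coset g) (coset g')"
  "proj_gen (Brc g) = brc (coset g)"
  by (simp_all add: proj_gen_def)

lemma over_G_lterm_map_lift: "over_G (lterm_map lift_gen t)"
proof (induction t)
  case (Gen X) then show ?case
    by (cases X) (simp_all add: lift_gen_def crep_quotient_mem)
qed simp_all

lemma over_Q_lterm_map_proj: "over_G t \<Longrightarrow> over_Q (lterm_map proj_gen t)"
proof (induction t)
  case (Gen x) then show ?case by (cases x) auto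
qed simp_all

lemma lterm_map_proj_lift: "over_Q s \<Longrightarrow> lterm_map proj_gen (lterm_map lift_gen s) = s"
proof -
  assume s: "over_Q s"
  have "lterm_map proj_gen (lterm_map lift_gen s) =
      lterm_map (\<lambda>X. lterm_map proj_gen (lift_gen X)) s"
    by (rule lterm_map_lterm_map)
  also have "\<dots> = lterm_map Gen s"
  proof (rule lterm_map_cong)
    fix X assume "X \<in> lgens s"
    then have "tgen_ok Q GQ q X" using s by (auto simp: lterm_over_def)
    then show "lterm_map proj_gen (lift_gen X) = Gen X"
      by (cases X) (simp_all add: lift_gen_def coset_crep_quotient)
  qed
  finally show ?thesis by simp
qed

lemma exterior_rels_proj:
  assumes "(s, t) \<in> RG" shows "(lterm_map proj_gen s, lterm_map proj_gen t) \<in> RQ"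
  using assms
  by (cases rule: exterior_rels_cases)
    (simp_all add: exterior_rels_intros smul_mem br_mem
      flip: quotient_add quotient_smul quotient_br)

lemma exterior_rels_quotient_preimage:
  assumes "(s, t) \<in> RQ"
  obtains s0 t0 where "(s0, t0) \<in> RG" "over_G s0" "over_G t0"
    "s = lterm_map proj_gen s0" "t = lterm_map proj_gen t0"
proof -
  note simps = exterior_rels_intros crep_quotient_mem coset_crep_quotient add_mem smul_mem br_mem
    quotient_add[symmetric] quotient_smul[symmetric] quotient_br[symmetric]
  from assms show ?thesis
  proof (cases rule: exterior_rels_cases)
    case (smul_Tns_left r A B)
    then show ?thesis
      by (intro that[of "LSmul r (tns (crep A) (crep B))" "tns (smul r (crep A)) (crep B)"])
        (simp_all add: simps)
  next
    case (smul_Tns_right r A B)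
    then show ?thesis
      by (intro that[of "LSmul r (tns (crep A) (crep B))" "tns (crep A) (smul r (crep B))"])
        (simp_all add: simps)
  next
    case (Tns_add_left A A' B)
    then show ?thesis
      by (intro that[of "tns (add (crep A) (crep A')) (crep B)"
            "LAdd (tns (crep A) (crep B)) (tns (crep A') (crep B))"])
        (simp_all add: simps)
  next
    case (Tns_add_right A B B')
    then show ?thesis
      by (intro that[of "tns (crep A) (add (crep B) (crep B'))"
            "LAdd (tns (crep A) (crep B)) (tns (crep A) (crep B'))"])
        (simp_all add: simps)
  next
    case (Tns_br_left A A' B)
    then show ?thesis
      by (intro that[of "tns (br (crep A) (crep A')) (crep B)"
            "LAdd (tns (crep A) (br (crep A') (crep B)))
               (LNeg (tns (crep A') (br (crep A) (crep B))))"])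
        (simp_all add: simps)
  next
    case (Tns_br_right A B B')
    then show ?thesis
      by (intro that[of "tns (crep A) (br (crep B) (crep B'))"
            "LAdd (tns (br (crep B') (crep A)) (crep B))
               (LNeg (tns (br (crep B) (crep A)) (crep B')))"])
        (simp_all add: simps)
  next
    case (br_Tns_Tns A B A' B')
    then show ?thesis
      by (intro that[of "LBr (tns (crep A) (crep B)) (tns (crep A') (crep B'))"
            "tns (br (crep A) (crep B)) (br (crep A') (crep B'))"])
        (simp_all add: simps)
  next
    case (br_Brc_Tns A' A B)
    then show ?thesis
      by (intro that[of "LBr (brc (crep A')) (tns (crep A) (crep B))"
            "LAdd (tns (br (qsmul (crep A')) (crep A)) (crep B))
               (tns (crep A) (br (qsmul (crep A')) (crep B)))"])
        (simp_all add: simps)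
  next
    case (Brc_linear r r' A A')
    then show ?thesis
      by (intro that[of "brc (add (smul r (crep A)) (smul r' (crep A')))"
            "LAdd (LSmul r (brc (crep A))) (LSmul r' (brc (crep A')))"])
        (simp_all add: simps)
  next
    case (br_Brc_Brc A A')
    then show ?thesis
      by (intro that[of "LBr (brc (crep A)) (brc (crep A'))"
            "tns (qsmul (crep A)) (qsmul (crep A'))"])
        (simp_all add: simps)
  next
    case (Brc_br A B)
    then show ?thesis
      by (intro that[of "brc (br (crep A) (crep B))" "LSmul (of_nat q) (tns (crep A) (crep B))"])
        (simp_all add: simps)
  next
    case (Tns_self A)
    then show ?thesis
      by (intro that[of "tns (crep A) (crep A)" "LZero"]) (simp_all add: simps)
  qed
qed

lemma cong_mod_image_lift_proj:
  "over_G t \<Longrightarrow> cong_mod_image (lterm_map lift_gen (lterm_map proj_gen t)) t"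
proof (induction t)
  case (Gen x)
  show ?case
  proof (cases x)
    case (Tns g g')
    with Gen have "g \<in> G" "g' \<in> G" by auto
    with Tns show ?thesis
      by (simp add: lift_gen_def cong_mod_image_Tns_coset crep_coset_carrier coset_crep_coset)
  next
    case (Brc g)
    with Gen have "g \<in> G" "0 < q" by auto
    with Brc show ?thesis
      by (simp add: lift_gen_def cong_mod_image_Brc_coset crep_coset_carrier coset_crep_coset)
  qed
next
  case LZero show ?case by (simp add: cong_mod_image_if_lcong lcong.refl)
next
  case (LAdd a b) then show ?case by (simp add: cong_mod_image_add)
next
  case (LNeg a) then show ?case by (simp add: cong_mod_image_neg)
next
  case (LSmul r a) then show ?case by (simp add: cong_mod_image_smul)
next
  case (LBr a b) then show ?case by (simp add: cong_mod_image_br)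
qed

lemma cong_mod_image_lift_if_lcong:
  "lcong RQ a b \<Longrightarrow> cong_mod_image (lterm_map lift_gen a) (lterm_map lift_gen b)"
proof (induction rule: lcong.induct)
  case (rel s t)
  then obtain s0 t0 where st: "(s0, t0) \<in> RG" "over_G s0" "over_G t0"
    "s = lterm_map proj_gen s0" "t = lterm_map proj_gen t0"
    by (rule exterior_rels_quotient_preimage)
  have "cong_mod_image (lterm_map lift_gen s) s0" using st by (simp add: cong_mod_image_lift_proj)
  also have "cong_mod_image s0 t0" using st(1) by (intro cong_mod_image_if_lcong lcong.rel)
  also have "cong_mod_image t0 (lterm_map lift_gen t)"
    using st by (simp add: cong_mod_image_sym cong_mod_image_lift_proj)
  finally show ?case .
next
  case (sym s t) from sym.IH show ?case by (rule cong_mod_image_sym)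
next
  case (trans s t u) from trans.IH show ?case by (rule cong_mod_image_trans)
next
  case (cAdd a a' b b') then show ?case by (simp add: cong_mod_image_add)
next
  case (cNeg a a') then show ?case by (simp add: cong_mod_image_neg)
next
  case (cSmul a a' r) then show ?case by (simp add: cong_mod_image_smul)
next
  case (cBr a a' b b') then show ?case by (simp add: cong_mod_image_br over_G_lterm_map_lift)
qed (simp_all add: cong_mod_image_if_lcong lcong.refl lcong_lie_axioms)

lemma lcong_quotient_Tns_zero: "g \<in> G \<Longrightarrow> lcong RQ (tns (coset zero) (coset g)) LZero"
proof (rule lcong_zero_if_eq_double)
  assume "g \<in> G"
  then have "(tns (ladd Q (coset zero) (coset zero)) (coset g),
              LAdd (tns (coset zero) (coset g)) (tns (coset zero) (coset g))) \<in> RQ"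
    by (intro exterior_rels_Tns_add_left) (simp_all add: zero_mem)
  then show "lcong RQ (tns (coset zero) (coset g))
      (LAdd (tns (coset zero) (coset g)) (tns (coset zero) (coset g)))"
    by (simp add: lcong.rel quotient_add zero_mem lie_add_zero)
qed

lemma lcong_quotient_Brc_zero: "0 < q \<Longrightarrow> lcong RQ (brc (coset zero)) LZero"
proof (rule lcong_zero_if_eq_double)
  assume "0 < q"
  then have "(brc (ladd Q (lsmul Q 1 (coset zero)) (lsmul Q 1 (coset zero))),
              LAdd (LSmul 1 (brc (coset zero))) (LSmul 1 (brc (coset zero)))) \<in> RQ"
    by (intro exterior_rels_Brc_linear) (simp_all add: zero_mem)
  then have "lcong RQ (brc (coset zero))
      (LAdd (LSmul 1 (brc (coset zero))) (LSmul 1 (brc (coset zero))))"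
    by (simp add: lcong.rel quotient_add quotient_smul zero_mem lie_add_zero lie_smul_one)
  also have "lcong RQ \<dots> (LAdd (brc (coset zero)) (brc (coset zero)))"
    by (intro lcong.cAdd lcong.smul_one)
  finally show "lcong RQ (brc (coset zero)) (LAdd (brc (coset zero)) (brc (coset zero)))" .
qed

lemma lcong_proj_over_H_zero: "over_H t \<Longrightarrow> lcong RQ (lterm_map proj_gen t) LZero"
proof (rule lcong_lterm_map_zero)
  fix x assume "over_H t" "x \<in> lgens t"
  then have x: "tgen_ok L H q x" by (auto simp: lterm_over_def)
  show "lcong RQ (proj_gen x) LZero"
  proof (cases x)
    case (Tns h g) with x show ?thesis by (simp add: coset_ideal lcong_quotient_Tns_zero)
  next
    case (Brc h) with x show ?thesis by (simp add: coset_ideal lcong_quotient_Brc_zero)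
  qed
qed

lemma ext_incl_pclass: "ext_incl L q (pclass RH t) = pclass RG t"
proof -
  have "lcong RH (crep (pclass RH t)) t" by (rule lcong.sym, rule lcong_crep_pclass)
  then have "lcong RG (crep (pclass RH t)) t"
    by (rule lcong_mono) (intro exterior_rels_mono ideal_subset)
  then show ?thesis unfolding ext_incl_def induced_map_def by (simp add: pclass_eq_iff)
qed

lemma ext_proj_pclass: "ext_proj L H q (pclass RG t) = pclass RQ (lterm_map proj_gen t)"
proof -
  have "lcong RG (crep (pclass RG t)) t" by (rule lcong.sym, rule lcong_crep_pclass)
  then have "lcong RQ (lterm_map proj_gen (crep (pclass RG t))) (lterm_map proj_gen t)"
    by (rule lcong_lterm_map) (rule lcong.rel, erule exterior_rels_proj)
  then show ?thesis
    unfolding ext_proj_def Let_def induced_map_def proj_gen_def[symmetric]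
    by (simp add: pclass_eq_iff)
qed

lemma ext_incl_image_eq_ext_proj_kernel:
  "ext_incl L q ` lcarrier (exterior_q L H q) =
     {x \<in> lcarrier (exterior_q L G q). ext_proj L H q x = lzero (exterior_q Q GQ q)}"
  (is "?image = ?kernel")
proof (intro equalityI subsetI)
  fix x assume "x \<in> ?image"
  then obtain t where t: "over_H t" "x = pclass RG t"
    by (auto simp: exterior_q_carrier ext_incl_pclass)
  then have "over_G t" by (simp add: over_G_if_over_H)
  moreover have "ext_proj L H q x = pclass RQ LZero"
    using t by (simp add: ext_proj_pclass pclass_eq_iff lcong_proj_over_H_zero)
  ultimately show "x \<in> ?kernel" using t by (auto simp: exterior_q_carrier exterior_q_zero)
next
  fix x assume "x \<in> ?kernel"
  then obtain t where t: "over_G t" "x = pclass RG t" "ext_proj L H q x = pclass RQ LZero"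
    by (auto simp: exterior_q_carrier exterior_q_zero)
  then have proj_t: "lcong RQ (lterm_map proj_gen t) LZero"
    by (simp add: ext_proj_pclass pclass_eq_iff)
  have "cong_mod_image t (lterm_map lift_gen (lterm_map proj_gen t))"
    using t(1) by (rule cong_mod_image_sym[OF cong_mod_image_lift_proj])
  also have "cong_mod_image \<dots> LZero"
    using cong_mod_image_lift_if_lcong[OF proj_t] by simp
  finally have "in_image t" by (rule in_image_if_cong_mod_image_zero)
  then obtain w where w: "over_H w" "lcong RG t w" unfolding in_image_def by blast
  then have "x = ext_incl L q (pclass RH w)"
    using t(2) by (simp add: ext_incl_pclass pclass_eq_iff)
  moreover have "pclass RH w \<in> lcarrier (exterior_q L H q)"
    unfolding exterior_q_carrier using w(1) by blast
  ultimately show "x \<in> ?image" by blast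
qed

lemma ext_proj_surj:
  "ext_proj L H q ` lcarrier (exterior_q L G q) = lcarrier (exterior_q Q GQ q)"
proof (intro equalityI subsetI)
  fix y assume "y \<in> ext_proj L H q ` lcarrier (exterior_q L G q)"
  then show "y \<in> lcarrier (exterior_q Q GQ q)"
    by (auto simp: exterior_q_carrier ext_proj_pclass over_Q_lterm_map_proj)
next
  fix y assume "y \<in> lcarrier (exterior_q Q GQ q)"
  then obtain s where "over_Q s" "y = pclass RQ s" by (auto simp: exterior_q_carrier)
  then have "y = ext_proj L H q (pclass RG (lterm_map lift_gen s))"
    by (simp add: ext_proj_pclass lterm_map_proj_lift)
  moreover have "pclass RG (lterm_map lift_gen s) \<in> lcarrier (exterior_q L G q)"
    unfolding exterior_q_carrier using over_G_lterm_map_lift by blast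
  ultimately show "y \<in> ext_proj L H q ` lcarrier (exterior_q L G q)" by blast
qed

end

theorem proposition3p2:
  fixes L :: "('r::comm_ring_1, 'a) lie_alg" and H :: "'a set" and q :: nat
  assumes "lie_algebra L" and "lie_ideal L H"
  shows "ext_incl L q ` lcarrier (exterior_q L H q) =
           {x \<in> lcarrier (exterior_q L (lcarrier L) q).
              ext_proj L H q x =
                lzero (exterior_q (quotient_lie L H) (lcarrier (quotient_lie L H)) q)} \<and>
         ext_proj L H q ` lcarrier (exterior_q L (lcarrier L) q) =
           lcarrier (exterior_q (quotient_lie L H) (lcarrier (quotient_lie L H)) q)"
proof -
  interpret lie_algebra_ideal_exterior L H q
    using assms by unfold_locales
  show ?thesis using ext_incl_image_eq_ext_proj_kernel ext_proj_surj by blast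
qed

end
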